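(* Let $L$ be an odd unimodular lattice in dimension $n\equiv 0\pmod 8$ which contains a $k$-frame. Then both even unimodular neighbors $L_0\cup L_1$ and $L_0\cup L_3$ of $L$ contain a $2k$-frame.
   Context: A lattice $L\subset\mathbb{R}^n$ is unimodular if $L=L^*$, where $L^*=\{x\in\mathbb{R}^n:(x,y)\in\mathbb{Z}\ \forall y\in L\}$; it is odd if it contains a vector of odd norm $(x,x)$. For an odd unimodular lattice $L$, let $L_0$ be the sublattice of vectors of even norm (index $2$ in $L$); then $L_0^*=L_0\cup L_1\cup L_2\cup L_3$ for cosets $L_1,L_2,L_3$ of $L_0$ with $L=L_0\cup L_2$. When $n\equiv 0\pmod 8$, $L_0\cup L_1$ and $L_0\cup L_3$ are even unimodular lattices, called the even unimodular neighbors of $L$. A $t$-frame of a lattice in dimension $n$ is a set of $n$ lattice vectors $f_1,\dots,f_n$ with $(f_i,f_j)=t\,\delta_{i,j}$. *)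

theory Defs
  imports "HOL-Analysis.Analysis"
begin

definition is_lattice :: "(real^'n) set \<Rightarrow> bool" where
  "is_lattice L \<longleftrightarrow> (\<exists>b :: 'n \<Rightarrow> real^'n. inj b \<and> independent (range b) \<and>
      L = {(\<Sum>i\<in>UNIV. of_int (c i) *\<^sub>R b i) | c :: 'n \<Rightarrow> int. True})"

definition dual_lattice :: "(real^'n) set \<Rightarrow> (real^'n) set" where
  "dual_lattice L = {x. \<forall>y\<in>L. x \<bullet> y \<in> \<int>}"

definition unimodular :: "(real^'n) set \<Rightarrow> bool" where
  "unimodular L \<longleftrightarrow> is_lattice L \<and> L = dual_lattice L"

definition odd_lattice :: "(real^'n) set \<Rightarrow> bool" where
  "odd_lattice L \<longleftrightarrow> (\<exists>x\<in>L. \<exists>m::int. x \<bullet> x = of_int m \<and> odd m)"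

text \<open>L_0: the sublattice of vectors of even norm.\<close>
definition even_part :: "(real^'n) set \<Rightarrow> (real^'n) set" where
  "even_part L = {x\<in>L. \<exists>m::int. x \<bullet> x = of_int m \<and> even m}"

definition has_frame :: "(real^'n) set \<Rightarrow> real \<Rightarrow> bool" where
  "has_frame L t \<longleftrightarrow> (\<exists>f :: 'n \<Rightarrow> real^'n. (\<forall>i. f i \<in> L) \<and>
      (\<forall>i j. f i \<bullet> f j = (if i = j then t else 0)))"

end

theory Submission
  imports Defs
begin

text \<open>Split the frame into pairs f, f' and replace each pair by f + f', f - f'. These vectors
  have norm 2k, which is even because k = f \<bullet> f is an integer in a unimodular lattice, so the
  new 2k-frame already lies in L_0 and hence in both even neighbours.\<close>

lemma dual_lattice_add: "x \<in> dual_lattice L \<Longrightarrow> y \<in> dual_lattice L \<Longrightarrow> x + y \<in> dual_lattice L"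
  unfolding dual_lattice_def by (auto simp: inner_add_left)

lemma dual_lattice_diff: "x \<in> dual_lattice L \<Longrightarrow> y \<in> dual_lattice L \<Longrightarrow> x - y \<in> dual_lattice L"
  unfolding dual_lattice_def by (auto simp: inner_diff_left)

lemma has_frame_mono: "has_frame L t \<Longrightarrow> L \<subseteq> M \<Longrightarrow> has_frame M t"
  unfolding has_frame_def by blast

lemma has_frame_norm_in_Ints:
  fixes L :: "(real^'n) set"
  assumes "has_frame L t" and "L \<subseteq> dual_lattice L"
  shows "t \<in> \<int>"
proof -
  obtain f :: "'n \<Rightarrow> real^'n" where fL: "\<And>i. f i \<in> L"
    and f_orth: "\<And>i j. f i \<bullet> f j = (if i = j then t else 0)"
    using assms(1) unfolding has_frame_def by blast
  have "f i \<bullet> f i \<in> \<int>" for i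
    using fL assms(2) unfolding dual_lattice_def by blast
  then show ?thesis
    using f_orth by simp
qed

lemma has_frame_even_part:
  fixes L :: "(real^'n) set"
  assumes "has_frame L (2 * of_int m)"
  shows "has_frame (even_part L) (2 * of_int m)"
proof -
  obtain f :: "'n \<Rightarrow> real^'n" where fL: "\<And>i. f i \<in> L"
    and f_orth: "\<And>i j. f i \<bullet> f j = (if i = j then 2 * of_int m else 0)"
    using assms unfolding has_frame_def by blast
  have "f i \<bullet> f i = of_int (2 * m)" for i
    using f_orth by simp
  then have "f i \<in> even_part L" for i
    unfolding even_part_def using fL by fastforce
  then show ?thesis
    unfolding has_frame_def using f_orth by blast
qed

definition sum_diff_pairs :: "('a \<times> bool \<Rightarrow> 'b::real_vector) \<Rightarrow> 'a \<times> bool \<Rightarrow> 'b" where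
  "sum_diff_pairs f = (\<lambda>(a, b). if b then f (a, True) + f (a, False) else f (a, True) - f (a, False))"

lemma sum_diff_pairs_orthogonal:
  fixes f :: "'a \<times> bool \<Rightarrow> 'b::real_inner"
  assumes "\<And>x y. x \<in> A \<times> UNIV \<Longrightarrow> y \<in> A \<times> UNIV \<Longrightarrow> f x \<bullet> f y = (if x = y then t else 0)"
    and "x \<in> A \<times> UNIV" and "y \<in> A \<times> UNIV"
  shows "sum_diff_pairs f x \<bullet> sum_diff_pairs f y = (if x = y then 2 * t else 0)"
proof -
  obtain a b a' b' where xy: "x = (a, b)" "y = (a', b')" "a \<in> A" "a' \<in> A"
    using assms(2,3) by auto
  then have "f (a, c) \<bullet> f (a', c') = (if a = a' \<and> c = c' then t else 0)" for c c'
    using assms(1) by auto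
  then show ?thesis
    unfolding sum_diff_pairs_def xy by (cases b; cases b') (auto simp: algebra_simps inner_commute)
qed

lemma even_card_bij_pairs:
  assumes "even CARD('n)"
  obtains h :: "'n::finite \<Rightarrow> nat \<times> bool" where "bij_betw h UNIV ({..<CARD('n) div 2} \<times> UNIV)"
proof -
  have "card ({..<CARD('n) div 2} \<times> (UNIV :: bool set)) = card (UNIV :: 'n set)"
    using assms by (simp add: card_cartesian_product)
  then show ?thesis
    using that finite_same_card_bij[of "UNIV :: 'n set"] by (metis finite finite_SigmaI finite_lessThan)
qed

lemma has_frame_double:
  fixes L :: "(real^'n) set"
  assumes "has_frame L t" and "even CARD('n)"
    and add: "\<And>x y. x \<in> L \<Longrightarrow> y \<in> L \<Longrightarrow> x + y \<in> L"
    and diff: "\<And>x y. x \<in> L \<Longrightarrow> y \<in> L \<Longrightarrow> x - y \<in> L"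
  shows "has_frame L (2 * t)"
proof -
  obtain f :: "'n \<Rightarrow> real^'n" where fL: "\<And>i. f i \<in> L"
    and f_orth: "\<And>i j. f i \<bullet> f j = (if i = j then t else 0)"
    using assms(1) unfolding has_frame_def by blast
  define A where "A = {..<CARD('n) div 2}"
  obtain h :: "'n \<Rightarrow> nat \<times> bool" where h: "bij_betw h UNIV (A \<times> UNIV)"
    using even_card_bij_pairs[OF assms(2)] unfolding A_def by blast
  define f' where "f' = f \<circ> inv_into UNIV h"
  have f'_orth: "f' x \<bullet> f' y = (if x = y then t else 0)" if "x \<in> A \<times> UNIV" "y \<in> A \<times> UNIV" for x y
    using that h f_orth unfolding f'_def
    by (auto simp: bij_betw_inv_into_right[OF h] dest: arg_cong[where f = h])
  define g where "g = sum_diff_pairs f'"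
  have "(g \<circ> h) i \<in> L" for i
    unfolding g_def f'_def sum_diff_pairs_def using fL add diff by (auto split: prod.split)
  moreover have "(g \<circ> h) i \<bullet> (g \<circ> h) j = (if i = j then 2 * t else 0)" for i j
  proof -
    have "h i \<in> A \<times> UNIV" "h j \<in> A \<times> UNIV"
      using h by (auto simp: bij_betw_def)
    then have "g (h i) \<bullet> g (h j) = (if h i = h j then 2 * t else 0)"
      unfolding g_def using sum_diff_pairs_orthogonal[of A f' t, OF f'_orth] by simp
    then show ?thesis
      using bij_betw_imp_inj_on[OF h] by (simp add: inj_eq)
  qed
  ultimately show ?thesis
    unfolding has_frame_def by blast
qed

theorem lemma3p2:
  fixes L :: "(real^'n) set" and k :: real
  assumes "unimodular L" and "odd_lattice L"
    and "CARD('n) mod 8 = 0"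
    and "has_frame L k"
  shows "\<forall>v \<in> dual_lattice (even_part L) - L.
           has_frame (even_part L \<union> (\<lambda>x. v + x) ` even_part L) (2 * k)"
proof -
  have self_dual: "dual_lattice L = L"
    using assms(1) unfolding unimodular_def by simp
  obtain m :: int where k: "k = of_int m"
    using has_frame_norm_in_Ints[OF assms(4)] self_dual by (auto elim: Ints_cases)
  have "even CARD('n)"
    using assms(3) by presburger
  then have "has_frame L (2 * k)"
    using has_frame_double[OF assms(4)] dual_lattice_add dual_lattice_diff self_dual by metis
  then have "has_frame (even_part L) (2 * k)"
    using has_frame_even_part k by blast
  then show ?thesis
    using has_frame_mono by blast
qed

end
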